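(* Let $(S,* )$ be a finite multisemigroup containing two different elements $a$ and $b$ such that $a*a=\{a\}$ and either $\{a,b\}\subseteq a*b$ or $\{a,b\}\subseteq b*a$. Then $(S,* )$ does not admit any deformation.
   Context: A multisemigroup is a set $S$ with a map $*:S\times S\to 2^S$ such that $\bigcup_{s\in x*y}s*z=\bigcup_{t\in y*z}x*t$ for all $x,y,z\in S$. A finitary multisemigroup with multiplicities on a non-empty set $S$ is a map $\mu:S\times S\to\{\text{functions }S\to\mathrm{Card}_{\aleph_0}\}$ (where $\mathrm{Card}_{\aleph_0}$ is the set of cardinals $\le\aleph_0$ with truncated cardinal arithmetic), $(s,t)\mapsto\mu_{s,t}$, such that every value $\mu_{r,s}(t)$ is finite, $\{t:\mu_{r,s}(t)\neq0\}$ is finite for all $r,s$, and for all $r,s,t\in S$: $\sum_{i\in S}\mu_{s,t}(i)\mu_{r,i}=\sum_{j\in S}\mu_{r,s}(j)\mu_{j,t}$ as functions on $S$ (where $\lambda\nu$ is the pointwise sum of $\lambda$ copies of $\nu$). A deformation of a finite multisemigroup $(S,* )$ is a finitary multisemigroup with multiplicities $(S,\mu)$ such that for all $x,y,z\in S$: $z\in x*y$ if and only if $\mu_{x,y}(z)\neq0$. *)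

theory Defs
  imports Main
begin

definition multisemigroup :: "'a set \<Rightarrow> ('a \<Rightarrow> 'a \<Rightarrow> 'a set) \<Rightarrow> bool" where
  "multisemigroup S mult \<longleftrightarrow>
     (\<forall>x\<in>S. \<forall>y\<in>S. mult x y \<subseteq> S) \<and>
     (\<forall>x\<in>S. \<forall>y\<in>S. \<forall>z\<in>S.
        (\<Union>s\<in>mult x y. mult s z) = (\<Union>t\<in>mult y z. mult x t))"

text \<open>All values mu r s t are required to be finite, so they are natural numbers;
  with finite supports all sums involved are finite sums of naturals, which
  coincide with the truncated cardinal sums.\<close>
definition finitary_multisemigroup_mult :: "'a set \<Rightarrow> ('a \<Rightarrow> 'a \<Rightarrow> 'a \<Rightarrow> nat) \<Rightarrow> bool" where
  "finitary_multisemigroup_mult S \<mu> \<longleftrightarrow>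
     S \<noteq> {} \<and>
     (\<forall>r\<in>S. \<forall>s\<in>S. finite {t\<in>S. \<mu> r s t \<noteq> 0}) \<and>
     (\<forall>r\<in>S. \<forall>s\<in>S. \<forall>t\<in>S. \<forall>u\<in>S.
        (\<Sum>i\<in>{i\<in>S. \<mu> s t i \<noteq> 0}. \<mu> s t i * \<mu> r i u)
      = (\<Sum>j\<in>{j\<in>S. \<mu> r s j \<noteq> 0}. \<mu> r s j * \<mu> j t u))"

definition deformation :: "'a set \<Rightarrow> ('a \<Rightarrow> 'a \<Rightarrow> 'a set) \<Rightarrow> ('a \<Rightarrow> 'a \<Rightarrow> 'a \<Rightarrow> nat) \<Rightarrow> bool" where
  "deformation S mult \<mu> \<longleftrightarrow>
     finitary_multisemigroup_mult S \<mu> \<and>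
     (\<forall>x\<in>S. \<forall>y\<in>S. \<forall>z\<in>S. z \<in> mult x y \<longleftrightarrow> \<mu> x y z \<noteq> 0)"

end

theory Submission
  imports Defs
begin

text \<open>If \<open>a * a = {a}\<close>, associativity of the multiplicities at \<open>(a, a, b)\<close> evaluated at \<open>a\<close>
  reads \<open>\<Sum>i. \<mu>\<^sub>a\<^sub>b(i) \<mu>\<^sub>a\<^sub>i(a) = \<mu>\<^sub>a\<^sub>a(a) \<mu>\<^sub>a\<^sub>b(a)\<close>. The summand \<open>i = a\<close> alone already equals
  the right-hand side, so the summand \<open>i = b\<close>, namely \<open>\<mu>\<^sub>a\<^sub>b(b) \<mu>\<^sub>a\<^sub>b(a)\<close>, must vanish:
  \<open>a * b\<close> cannot contain both \<open>a\<close> and \<open>b\<close>. The case \<open>{a, b} \<subseteq> b * a\<close> is the same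
  argument in the opposite multisemigroup.\<close>

lemma finitary_multisemigroup_mult_opposite:
  assumes "finitary_multisemigroup_mult S \<mu>"
  shows "finitary_multisemigroup_mult S (\<lambda>r s. \<mu> s r)"
  unfolding finitary_multisemigroup_mult_def
proof (intro conjI ballI)
  fix r s t u assume "r \<in> S" "s \<in> S" "t \<in> S" "u \<in> S"
  then show "(\<Sum>i\<in>{i\<in>S. \<mu> t s i \<noteq> 0}. \<mu> t s i * \<mu> i r u)
      = (\<Sum>j\<in>{j\<in>S. \<mu> s r j \<noteq> 0}. \<mu> s r j * \<mu> t j u)"
    using assms unfolding finitary_multisemigroup_mult_def by simp
qed (use assms in \<open>auto simp: finitary_multisemigroup_mult_def\<close>)

lemma idem_mult_support_not_both:
  assumes \<mu>: "finitary_multisemigroup_mult S \<mu>"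
    and "a \<in> S" "b \<in> S" "a \<noteq> b"
    and idem: "\<forall>i\<in>S. \<mu> a a i \<noteq> 0 \<longleftrightarrow> i = a"
  shows "\<mu> a b a = 0 \<or> \<mu> a b b = 0"
proof (rule ccontr)
  assume "\<not> (\<mu> a b a = 0 \<or> \<mu> a b b = 0)"
  then have ab: "\<mu> a b a > 0" "\<mu> a b b > 0" by auto
  let ?F = "{i\<in>S. \<mu> a b i \<noteq> 0}"
  have fin: "finite ?F"
    and assoc: "(\<Sum>i\<in>?F. \<mu> a b i * \<mu> a i a) = (\<Sum>j\<in>{j\<in>S. \<mu> a a j \<noteq> 0}. \<mu> a a j * \<mu> j b a)"
    using \<mu> \<open>a \<in> S\<close> \<open>b \<in> S\<close> unfolding finitary_multisemigroup_mult_def by blast+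
  have "{j\<in>S. \<mu> a a j \<noteq> 0} = {a}" using idem \<open>a \<in> S\<close> by auto
  then have rhs: "(\<Sum>i\<in>?F. \<mu> a b i * \<mu> a i a) = \<mu> a a a * \<mu> a b a" using assoc by simp
  have "\<mu> a b a * \<mu> a a a + \<mu> a b b * \<mu> a b a = (\<Sum>i\<in>{a, b}. \<mu> a b i * \<mu> a i a)"
    using \<open>a \<noteq> b\<close> by simp
  also have "\<dots> \<le> (\<Sum>i\<in>?F. \<mu> a b i * \<mu> a i a)"
    by (rule sum_mono2) (use fin ab \<open>a \<in> S\<close> \<open>b \<in> S\<close> in auto)
  finally show False using rhs ab by simp
qed

theorem corollary13:
  fixes S :: "'a set" and mult :: "'a \<Rightarrow> 'a \<Rightarrow> 'a set" and a b :: 'a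
  assumes "finite S" and "multisemigroup S mult"
    and "a \<in> S" and "b \<in> S" and "a \<noteq> b"
    and "mult a a = {a}"
    and "{a, b} \<subseteq> mult a b \<or> {a, b} \<subseteq> mult b a"
  shows "\<not> (\<exists>\<mu>. deformation S mult \<mu>)"
proof
  assume "\<exists>\<mu>. deformation S mult \<mu>"
  then obtain \<mu> where \<mu>: "finitary_multisemigroup_mult S \<mu>"
    and mem: "\<forall>x\<in>S. \<forall>y\<in>S. \<forall>z\<in>S. z \<in> mult x y \<longleftrightarrow> \<mu> x y z \<noteq> 0"
    unfolding deformation_def by blast
  have idem: "\<forall>i\<in>S. \<mu> a a i \<noteq> 0 \<longleftrightarrow> i = a"
    using mem \<open>a \<in> S\<close> \<open>mult a a = {a}\<close> by auto
  show False
    using \<open>{a, b} \<subseteq> mult a b \<or> {a, b} \<subseteq> mult b a\<close>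
  proof
    assume "{a, b} \<subseteq> mult a b"
    then show False
      using idem_mult_support_not_both[OF \<mu> \<open>a \<in> S\<close> \<open>b \<in> S\<close> \<open>a \<noteq> b\<close> idem]
        mem \<open>a \<in> S\<close> \<open>b \<in> S\<close> by auto
  next
    assume "{a, b} \<subseteq> mult b a"
    then show False
      using idem_mult_support_not_both[OF finitary_multisemigroup_mult_opposite[OF \<mu>]
          \<open>a \<in> S\<close> \<open>b \<in> S\<close> \<open>a \<noteq> b\<close> idem]
        mem \<open>a \<in> S\<close> \<open>b \<in> S\<close> by auto
  qed
qed

end
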